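(* Fix $n$ and let $\mathbb{A}$ be the set of adjacency matrices $A_\mathcal{D}$ of DAGs $\mathcal{D}$ on node set $[n]$ such that $i\to j\in E^\mathcal{D}$ implies $i<j$ (equivalently, $A_\mathcal{D}$ is strictly upper triangular). For $A_\mathcal{D}\in\mathbb{A}$ let $T=\sum_{p=0}^{n-1}A_\mathcal{D}^p$ and $U_\mathcal{D}=T^\top T$, and let $\mathbb{Y}=\{U_\mathcal{D}:A_\mathcal{D}\in\mathbb{A}\}$. Then the map $f:\mathbb{A}\to\mathbb{Y}$, $f(A_\mathcal{D})=U_\mathcal{D}$, is a bijection, and $a(U_\mathcal{D})$ is the adjacency matrix of the unconditional dependence graph $\mathcal{U}^\mathcal{D}$.
   Context: The adjacency matrix of a DAG on $[n]$ has $(i,j)$ entry $1$ iff $i\to j$ is an edge, else $0$. For a symmetric matrix $M$, $a(M)$ is the $0/1$ matrix with $a(M)_{v,w}=1$ iff $v\neq w$ and $M_{v,w}\neq0$. A trek in a DAG is a path (no repeated vertices) containing no collider (no node whose two incident path edges both point into it). The unconditional dependence graph $\mathcal{U}^\mathcal{D}$ is the undirected graph on the node set of $\mathcal{D}$ in which distinct $v,w$ are adjacent iff there is a trek between them in $\mathcal{D}$. *)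

theory Defs
  imports Main "Jordan_Normal_Form.Matrix"
begin

text \<open>Nodes of a DAG on [n] are represented as 0,...,n-1; a DAG is given by its
  edge relation E (pairs (i,j) meaning i -> j).\<close>

definition dag_on :: "nat \<Rightarrow> (nat \<times> nat) set \<Rightarrow> bool" where
  "dag_on n E \<longleftrightarrow> E \<subseteq> {..<n} \<times> {..<n} \<and> acyclic E"

definition ordered_dag_on :: "nat \<Rightarrow> (nat \<times> nat) set \<Rightarrow> bool" where
  "ordered_dag_on n E \<longleftrightarrow> dag_on n E \<and> (\<forall>(i,j)\<in>E. i < j)"

definition adj_mat :: "nat \<Rightarrow> (nat \<times> nat) set \<Rightarrow> int mat" where
  "adj_mat n E = mat n n (\<lambda>(i,j). if (i,j) \<in> E then 1 else 0)"

definition T_mat :: "nat \<Rightarrow> int mat \<Rightarrow> int mat" where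
  "T_mat n A = mat n n (\<lambda>(i,j). \<Sum>p<n. (A ^\<^sub>m p) $$ (i,j))"

definition U_mat :: "nat \<Rightarrow> int mat \<Rightarrow> int mat" where
  "U_mat n A = transpose_mat (T_mat n A) * T_mat n A"

definition supp_adj :: "int mat \<Rightarrow> int mat" where
  "supp_adj M = mat (dim_row M) (dim_col M)
     (\<lambda>(v,w). if v \<noteq> w \<and> M $$ (v,w) \<noteq> 0 then 1 else 0)"

definition is_trek :: "(nat \<times> nat) set \<Rightarrow> nat list \<Rightarrow> bool" where
  "is_trek E p \<longleftrightarrow> p \<noteq> [] \<and> distinct p \<and>
     (\<forall>k. Suc k < length p \<longrightarrow> (p!k, p!Suc k) \<in> E \<or> (p!Suc k, p!k) \<in> E) \<and>
     (\<forall>k. 0 < k \<and> Suc k < length p \<longrightarrow>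
        \<not> ((p!(k-1), p!k) \<in> E \<and> (p!Suc k, p!k) \<in> E))"

definition trek_between :: "(nat \<times> nat) set \<Rightarrow> nat \<Rightarrow> nat \<Rightarrow> bool" where
  "trek_between E v w \<longleftrightarrow> (\<exists>p. is_trek E p \<and> hd p = v \<and> last p = w)"

definition uncond_dep_adj :: "nat \<Rightarrow> (nat \<times> nat) set \<Rightarrow> int mat" where
  "uncond_dep_adj n E = mat n n (\<lambda>(v,w). if v \<noteq> w \<and> trek_between E v w then 1 else 0)"

end

theory Submission
  imports Defs
begin

text \<open>Since every edge increases the node index, \<open>A\<close> is nilpotent, so
  \<open>T = \<Sum>\<^sub>p A\<^sup>p = (I - A)\<inverse>\<close> is unit upper triangular with nonnegative entries,
  and \<open>T\<^sub>i\<^sub>j \<noteq> 0\<close> iff \<open>j\<close> is a descendant of \<open>i\<close>. A unit upper triangular \<open>T\<close> is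
  recovered from \<open>T\<^sup>T T\<close> row by row (a Cholesky factorisation with unit diagonal), and
  \<open>T\<close> determines \<open>A = I - T\<inverse>\<close>; this gives injectivity.
  By nonnegativity, \<open>U\<^sub>v\<^sub>w \<noteq> 0\<close> iff \<open>v\<close> and \<open>w\<close> have a common ancestor. A path
  without colliders is exactly one whose edges point away from a single source vertex;
  such a path between \<open>v\<close> and \<open>w\<close> is obtained from the directed paths out of their
  largest common ancestor, which share no other vertex.\<close>

section \<open>Nilpotent geometric series and unit upper triangular Gram matrices\<close>

lemma index_mult_mat_sum:
  assumes "A \<in> carrier_mat m n" "B \<in> carrier_mat n l" "i < m" "j < l"
  shows "(A * B) $$ (i,j) = (\<Sum>k<n. A $$ (i,k) * B $$ (k,j))"
  using assms by (auto simp: scalar_prod_def lessThan_atLeast0 intro!: sum.cong)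

lemma pow_mat_commute:
  assumes "A \<in> carrier_mat n n"
  shows "A * A ^\<^sub>m p = A ^\<^sub>m p * A"
proof (induction p)
  case (Suc p)
  have "A * A ^\<^sub>m Suc p = (A * A ^\<^sub>m p) * A"
    using assms by (simp add: assoc_mult_mat[of _ n n _ n _ n])
  then show ?case by (simp add: Suc.IH)
qed (use assms in simp)

lemma T_mat_carrier [simp]: "T_mat n A \<in> carrier_mat n n"
  by (simp add: T_mat_def)

lemma T_mat_dim [simp]: "dim_row (T_mat n A) = n" "dim_col (T_mat n A) = n"
  by (simp_all add: T_mat_def)

lemma index_T_mat: "i < n \<Longrightarrow> j < n \<Longrightarrow> T_mat n A $$ (i,j) = (\<Sum>p<n. (A ^\<^sub>m p) $$ (i,j))"
  by (simp add: T_mat_def)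

lemma index_T_mat_mult:
  assumes A: "A \<in> carrier_mat n n" and ij: "i < n" "j < n"
  shows "(T_mat n A * A) $$ (i,j) = (\<Sum>p<n. (A ^\<^sub>m Suc p) $$ (i,j))"
    and "(A * T_mat n A) $$ (i,j) = (\<Sum>p<n. (A ^\<^sub>m Suc p) $$ (i,j))"
proof -
  have "(T_mat n A * A) $$ (i,j) = (\<Sum>k<n. T_mat n A $$ (i,k) * A $$ (k,j))"
    by (rule index_mult_mat_sum[OF T_mat_carrier A ij])
  also have "\<dots> = (\<Sum>k<n. \<Sum>p<n. (A ^\<^sub>m p) $$ (i,k) * A $$ (k,j))"
    using ij by (intro sum.cong refl) (simp add: index_T_mat sum_distrib_right)
  also have "\<dots> = (\<Sum>p<n. \<Sum>k<n. (A ^\<^sub>m p) $$ (i,k) * A $$ (k,j))"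
    by (rule sum.swap)
  also have "\<dots> = (\<Sum>p<n. (A ^\<^sub>m p * A) $$ (i,j))"
    using A ij by (intro sum.cong refl index_mult_mat_sum[symmetric]) auto
  finally show "(T_mat n A * A) $$ (i,j) = (\<Sum>p<n. (A ^\<^sub>m Suc p) $$ (i,j))"
    by simp
  have "(A * T_mat n A) $$ (i,j) = (\<Sum>k<n. A $$ (i,k) * T_mat n A $$ (k,j))"
    by (rule index_mult_mat_sum[OF A T_mat_carrier ij])
  also have "\<dots> = (\<Sum>k<n. \<Sum>p<n. A $$ (i,k) * (A ^\<^sub>m p) $$ (k,j))"
    using ij by (intro sum.cong refl) (simp add: index_T_mat sum_distrib_left)
  also have "\<dots> = (\<Sum>p<n. \<Sum>k<n. A $$ (i,k) * (A ^\<^sub>m p) $$ (k,j))"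
    by (rule sum.swap)
  also have "\<dots> = (\<Sum>p<n. (A * A ^\<^sub>m p) $$ (i,j))"
    using A ij by (intro sum.cong refl index_mult_mat_sum[symmetric]) auto
  finally show "(A * T_mat n A) $$ (i,j) = (\<Sum>p<n. (A ^\<^sub>m Suc p) $$ (i,j))"
    by (simp add: pow_mat_commute[OF A])
qed

lemma T_mat_inverse:
  assumes A: "A \<in> carrier_mat n n" and nilpotent: "A ^\<^sub>m n = 0\<^sub>m n n"
  shows "T_mat n A * (1\<^sub>m n - A) = 1\<^sub>m n" and "(1\<^sub>m n - A) * T_mat n A = 1\<^sub>m n"
proof -
  have telescope: "T_mat n A $$ (i,j) - (\<Sum>p<n. (A ^\<^sub>m Suc p) $$ (i,j)) = 1\<^sub>m n $$ (i,j)"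
    if "i < n" "j < n" for i j
  proof -
    have "T_mat n A $$ (i,j) - (\<Sum>p<n. (A ^\<^sub>m Suc p) $$ (i,j))
        = (\<Sum>p<n. (A ^\<^sub>m p) $$ (i,j) - (A ^\<^sub>m Suc p) $$ (i,j))"
      using that by (simp add: index_T_mat sum_subtractf)
    also have "\<dots> = (A ^\<^sub>m 0) $$ (i,j) - (A ^\<^sub>m n) $$ (i,j)"
      by (rule sum_lessThan_telescope')
    finally show ?thesis
      using A nilpotent that by simp
  qed
  show "T_mat n A * (1\<^sub>m n - A) = 1\<^sub>m n"
  proof (rule eq_matI)
    fix i j assume "i < dim_row (1\<^sub>m n :: int mat)" "j < dim_col (1\<^sub>m n :: int mat)"
    then have ij: "i < n" "j < n" by simp_all
    have "(T_mat n A * (1\<^sub>m n - A)) $$ (i,j) = T_mat n A $$ (i,j) - (T_mat n A * A) $$ (i,j)"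
      using mult_minus_distrib_mat[OF T_mat_carrier[of n A] one_carrier_mat A] ij carrier_matD[OF A]
      by (simp add: right_mult_one_mat[OF T_mat_carrier])
    also have "\<dots> = 1\<^sub>m n $$ (i,j)"
      unfolding index_T_mat_mult(1)[OF A ij] by (rule telescope[OF ij])
    finally show "(T_mat n A * (1\<^sub>m n - A)) $$ (i,j) = 1\<^sub>m n $$ (i,j)" .
  qed (use A in auto)
  show "(1\<^sub>m n - A) * T_mat n A = 1\<^sub>m n"
  proof (rule eq_matI)
    fix i j assume "i < dim_row (1\<^sub>m n :: int mat)" "j < dim_col (1\<^sub>m n :: int mat)"
    then have ij: "i < n" "j < n" by simp_all
    have "((1\<^sub>m n - A) * T_mat n A) $$ (i,j) = T_mat n A $$ (i,j) - (A * T_mat n A) $$ (i,j)"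
      using minus_mult_distrib_mat[OF one_carrier_mat A T_mat_carrier[of n A]] ij carrier_matD[OF A]
      by (simp add: left_mult_one_mat[OF T_mat_carrier])
    also have "\<dots> = 1\<^sub>m n $$ (i,j)"
      unfolding index_T_mat_mult(2)[OF A ij] by (rule telescope[OF ij])
    finally show "((1\<^sub>m n - A) * T_mat n A) $$ (i,j) = 1\<^sub>m n $$ (i,j)" .
  qed (use A in auto)
qed

lemma index_transpose_mult_sum:
  assumes "T \<in> carrier_mat n n" "i < n" "j < n"
  shows "(transpose_mat T * T) $$ (i,j) = (\<Sum>k<n. T $$ (k,i) * T $$ (k,j))"
  by (subst index_mult_mat_sum[of _ n n]) (use assms in auto)

lemma index_transpose_mult_unit_upper_triangular:
  fixes T :: "'a :: comm_ring_1 mat"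
  assumes T: "T \<in> carrier_mat n n" "upper_triangular T" "\<forall>i<n. T $$ (i,i) = 1"
    and ij: "i < n" "j < n"
  shows "(transpose_mat T * T) $$ (i,j) = T $$ (i,j) + (\<Sum>k<i. T $$ (k,i) * T $$ (k,j))"
proof -
  have "(transpose_mat T * T) $$ (i,j) = (\<Sum>k<Suc i. T $$ (k,i) * T $$ (k,j))"
    unfolding index_transpose_mult_sum[OF T(1) ij]
    using T ij by (intro sum.mono_neutral_right) (auto simp: upper_triangular_def)
  then show ?thesis
    using T ij by simp
qed

lemma unit_upper_triangular_transpose_mult_inj:
  fixes T1 T2 :: "'a :: comm_ring_1 mat"
  assumes T1: "T1 \<in> carrier_mat n n" "upper_triangular T1" "\<forall>i<n. T1 $$ (i,i) = 1"
    and T2: "T2 \<in> carrier_mat n n" "upper_triangular T2" "\<forall>i<n. T2 $$ (i,i) = 1"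
    and eq: "transpose_mat T1 * T1 = transpose_mat T2 * T2"
  shows "T1 = T2"
proof -
  have "\<forall>j<n. T1 $$ (i,j) = T2 $$ (i,j)" if "i < n" for i
    using that
  proof (induction i rule: less_induct)
    case (less i)
    show ?case
    proof (intro allI impI)
      fix j assume j: "j < n"
      have "(\<Sum>k<i. T1 $$ (k,i) * T1 $$ (k,j)) = (\<Sum>k<i. T2 $$ (k,i) * T2 $$ (k,j))"
        using less j by (intro sum.cong) auto
      moreover have "(transpose_mat T1 * T1) $$ (i,j) = (transpose_mat T2 * T2) $$ (i,j)"
        using eq by simp
      ultimately show "T1 $$ (i,j) = T2 $$ (i,j)"
        unfolding index_transpose_mult_unit_upper_triangular[OF T1 less.prems j]
          index_transpose_mult_unit_upper_triangular[OF T2 less.prems j] by simp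
    qed
  qed
  then show ?thesis
    using T1 T2 by (intro eq_matI) auto
qed

lemma inverse_mat_unique:
  fixes B C T :: "'a :: semiring_1 mat"
  assumes "B \<in> carrier_mat n n" "C \<in> carrier_mat n n" "T \<in> carrier_mat n n"
    and "B * T = 1\<^sub>m n" "T * C = 1\<^sub>m n"
  shows "B = C"
proof -
  have "B = B * (T * C)" using assms by simp
  also have "\<dots> = (B * T) * C" by (rule assoc_mult_mat[OF assms(1,3,2), symmetric])
  also have "\<dots> = C" using assms by simp
  finally show ?thesis .
qed

section \<open>Path matrices of ordered DAGs\<close>

lemma adj_mat_carrier [simp]: "adj_mat n E \<in> carrier_mat n n"
  by (simp add: adj_mat_def)

lemma adj_mat_dim [simp]: "dim_row (adj_mat n E) = n" "dim_col (adj_mat n E) = n"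
  by (simp_all add: adj_mat_def)

lemma index_adj_mat: "i < n \<Longrightarrow> j < n \<Longrightarrow> adj_mat n E $$ (i,j) = (if (i,j) \<in> E then 1 else 0)"
  by (simp add: adj_mat_def)

lemma index_adj_mat_pow:
  assumes E: "E \<subseteq> {..<n} \<times> {..<n}" and ij: "i < n" "j < n"
  shows "0 \<le> (adj_mat n E ^\<^sub>m p) $$ (i,j) \<and> ((adj_mat n E ^\<^sub>m p) $$ (i,j) \<noteq> 0 \<longleftrightarrow> (i,j) \<in> E ^^ p)"
  using ij(2)
proof (induction p arbitrary: j)
  case 0
  then show ?case using ij by simp
next
  case (Suc p)
  let ?A = "adj_mat n E"
  let ?summand = "\<lambda>k. (?A ^\<^sub>m p) $$ (i,k) * ?A $$ (k,j)"
  have entry: "(?A ^\<^sub>m Suc p) $$ (i,j) = (\<Sum>k<n. ?summand k)"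
    unfolding pow_mat.simps(2) by (rule index_mult_mat_sum) (use ij Suc.prems in auto)
  have summand: "0 \<le> ?summand k \<and> (?summand k \<noteq> 0 \<longleftrightarrow> (i,k) \<in> E ^^ p \<and> (k,j) \<in> E)" if "k < n" for k
    using Suc.IH[OF that] Suc.prems that by (simp add: index_adj_mat)
  have "(i,j) \<in> E ^^ Suc p \<longleftrightarrow> (\<exists>k<n. (i,k) \<in> E ^^ p \<and> (k,j) \<in> E)"
    using E by auto
  then show ?case
    unfolding entry using summand sum_nonneg_eq_0_iff[of "{..<n}" ?summand] by (auto intro: sum_nonneg)
qed

lemma ordered_relpow_le:
  assumes "\<forall>(i,j)\<in>E. i < j" and "(i,j) \<in> E ^^ p"
  shows "i + p \<le> j"
  using assms(2)
proof (induction p arbitrary: j)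
  case (Suc p)
  then obtain k where "(i,k) \<in> E ^^ p" "(k,j) \<in> E" by auto
  with Suc.IH assms(1) show ?case by fastforce
qed simp

lemma ordered_rtrancl_le:
  fixes E :: "(nat \<times> nat) set"
  assumes "\<forall>(i,j)\<in>E. i < j" and "(i,j) \<in> E\<^sup>*"
  shows "i \<le> j"
proof -
  obtain p where "(i,j) \<in> E ^^ p"
    using assms(2) by (blast dest: rtrancl_imp_relpow)
  then show ?thesis
    using ordered_relpow_le[OF assms(1)] by fastforce
qed

lemma ordered_dag_on_subset: "ordered_dag_on n E \<Longrightarrow> E \<subseteq> {..<n} \<times> {..<n}"
  by (simp add: ordered_dag_on_def dag_on_def)

lemma ordered_dag_on_less: "ordered_dag_on n E \<Longrightarrow> \<forall>(i,j)\<in>E. i < j"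
  by (simp add: ordered_dag_on_def)

lemma adj_mat_pow_neq_0_iff:
  assumes "ordered_dag_on n E" "i < n" "j < n"
  shows "(adj_mat n E ^\<^sub>m p) $$ (i,j) \<noteq> 0 \<longleftrightarrow> (i,j) \<in> E ^^ p"
  using index_adj_mat_pow[OF ordered_dag_on_subset] assms by blast

lemma adj_mat_nilpotent:
  assumes E: "ordered_dag_on n E"
  shows "adj_mat n E ^\<^sub>m n = 0\<^sub>m n n"
proof (rule eq_matI)
  fix i j assume "i < dim_row (0\<^sub>m n n :: int mat)" "j < dim_col (0\<^sub>m n n :: int mat)"
  then have ij: "i < n" "j < n" by simp_all
  then have "(i,j) \<notin> E ^^ n"
    using ordered_relpow_le[OF ordered_dag_on_less[OF E]] by fastforce
  then have "(adj_mat n E ^\<^sub>m n) $$ (i,j) = 0"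
    using adj_mat_pow_neq_0_iff[OF E ij] by blast
  then show "(adj_mat n E ^\<^sub>m n) $$ (i,j) = 0\<^sub>m n n $$ (i,j)"
    using ij by simp
qed auto

lemma T_mat_adj_nonneg:
  assumes "ordered_dag_on n E" "i < n" "j < n"
  shows "0 \<le> T_mat n (adj_mat n E) $$ (i,j)"
  using index_adj_mat_pow[OF ordered_dag_on_subset] assms by (simp add: index_T_mat sum_nonneg)

lemma T_mat_adj_neq_0_iff:
  assumes E: "ordered_dag_on n E" and ij: "i < n" "j < n"
  shows "T_mat n (adj_mat n E) $$ (i,j) \<noteq> 0 \<longleftrightarrow> (i,j) \<in> E\<^sup>*"
proof -
  let ?f = "\<lambda>p. (adj_mat n E ^\<^sub>m p) $$ (i,j)"
  have "(\<Sum>p<n. ?f p) \<noteq> 0 \<longleftrightarrow> (\<exists>p<n. (i,j) \<in> E ^^ p)"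
    using sum_nonneg_eq_0_iff[of "{..<n}" ?f] index_adj_mat_pow[OF ordered_dag_on_subset[OF E] ij]
      adj_mat_pow_neq_0_iff[OF E ij] by auto
  also have "\<dots> \<longleftrightarrow> (i,j) \<in> E\<^sup>*"
  proof
    assume "(i,j) \<in> E\<^sup>*"
    then obtain p where p: "(i,j) \<in> E ^^ p"
      by (blast dest: rtrancl_imp_relpow)
    then have "p < n"
      using ordered_relpow_le[OF ordered_dag_on_less[OF E] p] ij by linarith
    with p show "\<exists>p<n. (i,j) \<in> E ^^ p" by blast
  qed (blast intro: relpow_imp_rtrancl)
  finally show ?thesis
    using ij by (simp add: index_T_mat)
qed

lemma T_mat_adj_lower:
  assumes E: "ordered_dag_on n E" and ij: "i < n" "j \<le> i"
  shows "T_mat n (adj_mat n E) $$ (i,j) = (if i = j then 1 else 0)"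
proof -
  have j: "j < n" using ij by linarith
  have "(adj_mat n E ^\<^sub>m p) $$ (i,j) = (if p = 0 \<and> i = j then 1 else 0)" for p
  proof (cases p)
    case (Suc q)
    then have "(i,j) \<notin> E ^^ p"
      using ordered_relpow_le[OF ordered_dag_on_less[OF E]] ij by fastforce
    then have "(adj_mat n E ^\<^sub>m p) $$ (i,j) = 0"
      using adj_mat_pow_neq_0_iff[OF E ij(1) j] by blast
    then show ?thesis
      using Suc by simp
  qed (use ij j in simp)
  then show ?thesis
    using ij by (simp add: index_T_mat)
qed

lemma U_mat_adj_neq_0_iff:
  assumes E: "ordered_dag_on n E" and ij: "i < n" "j < n"
  shows "U_mat n (adj_mat n E) $$ (i,j) \<noteq> 0 \<longleftrightarrow> (\<exists>k. (k,i) \<in> E\<^sup>* \<and> (k,j) \<in> E\<^sup>*)"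
proof -
  let ?T = "T_mat n (adj_mat n E)"
  let ?f = "\<lambda>k. ?T $$ (k,i) * ?T $$ (k,j)"
  have "(\<Sum>k<n. ?f k) \<noteq> 0 \<longleftrightarrow> (\<exists>k<n. (k,i) \<in> E\<^sup>* \<and> (k,j) \<in> E\<^sup>*)"
    using sum_nonneg_eq_0_iff[of "{..<n}" ?f] T_mat_adj_nonneg[OF E] T_mat_adj_neq_0_iff[OF E] ij
    by auto
  also have "\<dots> \<longleftrightarrow> (\<exists>k. (k,i) \<in> E\<^sup>* \<and> (k,j) \<in> E\<^sup>*)"
    using ordered_rtrancl_le[OF ordered_dag_on_less[OF E]] ij by (meson le_less_trans)
  finally show ?thesis
    unfolding U_mat_def index_transpose_mult_sum[OF T_mat_carrier ij] .
qed

lemma U_mat_adj_inj: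
  assumes E1: "ordered_dag_on n E1" and E2: "ordered_dag_on n E2"
    and U: "U_mat n (adj_mat n E1) = U_mat n (adj_mat n E2)"
  shows "adj_mat n E1 = adj_mat n E2"
proof -
  have unit_upper: "upper_triangular (T_mat n (adj_mat n E))"
    "\<forall>i<n. T_mat n (adj_mat n E) $$ (i,i) = 1" if "ordered_dag_on n E" for E
    using T_mat_adj_lower[OF that] by (auto simp: upper_triangular_def)
  have T: "T_mat n (adj_mat n E1) = T_mat n (adj_mat n E2)"
    using unit_upper_triangular_transpose_mult_inj[OF T_mat_carrier unit_upper[OF E1]
        T_mat_carrier unit_upper[OF E2]] U by (simp add: U_mat_def)
  have eq: "1\<^sub>m n - adj_mat n E1 = 1\<^sub>m n - adj_mat n E2"
  proof (rule inverse_mat_unique)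
    show "(1\<^sub>m n - adj_mat n E1) * T_mat n (adj_mat n E2) = 1\<^sub>m n"
      using T_mat_inverse(2)[OF adj_mat_carrier adj_mat_nilpotent[OF E1]] T by simp
    show "T_mat n (adj_mat n E2) * (1\<^sub>m n - adj_mat n E2) = 1\<^sub>m n"
      by (rule T_mat_inverse(1)[OF adj_mat_carrier adj_mat_nilpotent[OF E2]])
  qed auto
  show ?thesis
  proof (rule eq_matI)
    fix i j assume "i < dim_row (adj_mat n E2)" "j < dim_col (adj_mat n E2)"
    then show "adj_mat n E1 $$ (i,j) = adj_mat n E2 $$ (i,j)"
      using arg_cong[OF eq, of "\<lambda>M. M $$ (i,j)"] by simp
  qed auto
qed

section \<open>Treks as diverging paths\<close>

lemma successively_imp_rtrancl:
  assumes "successively (\<lambda>x y. (x,y) \<in> E) xs" "x \<in> set xs"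
  shows "(hd xs, x) \<in> E\<^sup>* \<and> (x, last xs) \<in> E\<^sup>*"
  using assms
proof (induction xs arbitrary: x)
  case (Cons a ys)
  show ?case
  proof (cases ys)
    case (Cons b zs)
    then have ab: "(a, b) \<in> E" and walk: "successively (\<lambda>x y. (x,y) \<in> E) ys"
      using Cons.prems(1) by auto
    have "(b, last ys) \<in> E\<^sup>*"
      using Cons.IH[OF walk, of "last ys"] \<open>ys = b # zs\<close> by simp
    moreover have "(hd ys, x) \<in> E\<^sup>* \<and> (x, last ys) \<in> E\<^sup>*" if "x \<in> set ys"
      using Cons.IH[OF walk that] .
    ultimately show ?thesis
      using Cons.prems(2) ab \<open>ys = b # zs\<close> by (auto intro: converse_rtrancl_into_rtrancl)
  qed (use Cons.prems in simp)
qed simp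

lemma rtrancl_imp_successively:
  assumes "(c,v) \<in> E\<^sup>*"
  obtains R where "last (c # R) = v" "successively (\<lambda>x y. (x,y) \<in> E) (c # R)"
  using assms
proof (induction arbitrary: thesis rule: converse_rtrancl_induct)
  case base
  show ?case by (rule base[of "[]"]) simp_all
next
  case (step c y)
  show ?case
  proof (rule step.IH)
    fix R assume "last (y # R) = v" "successively (\<lambda>x y. (x,y) \<in> E) (y # R)"
    then show thesis
      using step.hyps(1) by (intro step.prems[of "y # R"]) simp_all
  qed
qed

lemma ordered_successively_distinct:
  fixes E :: "(nat \<times> nat) set"
  assumes "\<forall>(i,j)\<in>E. i < j" "successively (\<lambda>x y. (x,y) \<in> E) xs"
  shows "distinct xs"
proof -
  have "successively (<) xs"
    using assms by (auto elim: successively_mono)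
  then show ?thesis
    by (simp add: successively_conv_sorted_wrt strict_sorted_iff)
qed

definition diverging_path :: "(nat \<times> nat) set \<Rightarrow> nat \<Rightarrow> nat list \<Rightarrow> bool" where
  "diverging_path E m q \<longleftrightarrow> m < length q \<and>
     successively (\<lambda>x y. (y,x) \<in> E) (take (Suc m) q) \<and> successively (\<lambda>x y. (x,y) \<in> E) (drop m q)"

lemma diverging_path_nth:
  "diverging_path E m q \<longleftrightarrow> m < length q \<and> (\<forall>k<m. (q!Suc k, q!k) \<in> E) \<and>
     (\<forall>k. m \<le> k \<and> Suc k < length q \<longrightarrow> (q!k, q!Suc k) \<in> E)"
proof (cases "m < length q")
  case True
  have "(\<forall>i. Suc i < length (drop m q) \<longrightarrow> (drop m q ! i, drop m q ! Suc i) \<in> E) \<longleftrightarrow>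
      (\<forall>k. m \<le> k \<and> Suc k < length q \<longrightarrow> (q!k, q!Suc k) \<in> E)"
  proof (intro iffI allI impI)
    fix k assume "\<forall>i. Suc i < length (drop m q) \<longrightarrow> (drop m q ! i, drop m q ! Suc i) \<in> E"
      and "m \<le> k \<and> Suc k < length q"
    then show "(q!k, q!Suc k) \<in> E"
      using True by (auto dest: spec[of _ "k - m"])
  next
    fix i assume "\<forall>k. m \<le> k \<and> Suc k < length q \<longrightarrow> (q!k, q!Suc k) \<in> E"
      and "Suc i < length (drop m q)"
    then show "(drop m q ! i, drop m q ! Suc i) \<in> E"
      using True by (auto dest: spec[of _ "m + i"])
  qed
  then show ?thesis
    unfolding diverging_path_def successively_conv_nth using True by auto
qed (simp add: diverging_path_def)

lemma diverging_path_common_ancestor: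
  assumes "diverging_path E m q"
  shows "(q!m, hd q) \<in> E\<^sup>*" "(q!m, last q) \<in> E\<^sup>*"
proof -
  have m: "m < length q" and
    backward: "successively (\<lambda>x y. (x,y) \<in> E) (rev (take (Suc m) q))" and
    forward: "successively (\<lambda>x y. (x,y) \<in> E) (drop m q)"
    using assms by (simp_all add: diverging_path_def)
  have "last (take (Suc m) q) = q!m" "hd q \<in> set (take (Suc m) q)"
    using m by (simp add: take_Suc_conv_app_nth, cases q, simp_all)
  then show "(q!m, hd q) \<in> E\<^sup>*"
    using successively_imp_rtrancl[OF backward, of "hd q"] by (simp add: hd_rev)
  have "last q \<in> set (drop m q)"
    using m by (metis drop_eq_Nil last_drop last_in_set not_le)
  then show "(q!m, last q) \<in> E\<^sup>*"
    using successively_imp_rtrancl[OF forward, of "last q"] m by (simp add: hd_drop_conv_nth)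
qed

lemma trek_imp_diverging_path:
  assumes trek: "is_trek E p"
  obtains m where "diverging_path E m p"
proof -
  have "p \<noteq> []" and adjacent: "\<And>k. Suc k < length p \<Longrightarrow> (p!k, p!Suc k) \<in> E \<or> (p!Suc k, p!k) \<in> E"
    using trek unfolding is_trek_def by blast+
  have no_collider: "\<not> ((p!k, p!Suc k) \<in> E \<and> (p!Suc (Suc k), p!Suc k) \<in> E)"
    if "Suc (Suc k) < length p" for k
    using trek that unfolding is_trek_def by (metis diff_Suc_1 zero_less_Suc)
  show thesis
  proof (cases "\<exists>k. Suc k < length p \<and> (p!k, p!Suc k) \<in> E")
    case False
    then have "diverging_path E (length p - 1) p"
      unfolding diverging_path_nth using \<open>p \<noteq> []\<close> adjacent by auto
    then show thesis by (rule that)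
  next
    case True
    define m where "m = (LEAST k. Suc k < length p \<and> (p!k, p!Suc k) \<in> E)"
    have m: "Suc m < length p" "(p!m, p!Suc m) \<in> E"
      using LeastI_ex[OF True] unfolding m_def by blast+
    have before: "\<not> (Suc k < length p \<and> (p!k, p!Suc k) \<in> E)" if "k < m" for k
      using not_less_Least[OF that[unfolded m_def]] .
    have after: "(p!k, p!Suc k) \<in> E" if "m \<le> k" "Suc k < length p" for k
      using that
    proof (induction k rule: dec_induct)
      case (step k)
      then have "(p!k, p!Suc k) \<in> E" by simp
      then show ?case
        using adjacent[OF step.prems] no_collider[OF step.prems] by blast
    qed (use m in simp)
    have "(p!Suc k, p!k) \<in> E" if "k < m" for k
      using adjacent[of k] before[OF that] that m(1) by simp
    then have "diverging_path E m p"
      unfolding diverging_path_nth using m after by auto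
    then show thesis by (rule that)
  qed
qed

lemma diverging_path_is_trek:
  assumes "asym E" "distinct q" "diverging_path E m q"
  shows "is_trek E q"
proof -
  have m: "m < length q" and backward: "\<And>k. k < m \<Longrightarrow> (q!Suc k, q!k) \<in> E"
    and forward: "\<And>k. m \<le> k \<Longrightarrow> Suc k < length q \<Longrightarrow> (q!k, q!Suc k) \<in> E"
    using assms(3) unfolding diverging_path_nth by auto
  have "\<not> ((q!(k-1), q!k) \<in> E \<and> (q!Suc k, q!k) \<in> E)" if "0 < k" "Suc k < length q" for k
  proof (cases "k \<le> m")
    case True
    then have "(q!k, q!(k-1)) \<in> E"
      using backward[of "k-1"] that by simp
    then show ?thesis using asymD[OF assms(1)] by blast
  next
    case False
    then show ?thesis using forward[of k] that asymD[OF assms(1)] by auto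
  qed
  moreover have "(q!k, q!Suc k) \<in> E \<or> (q!Suc k, q!k) \<in> E" if "Suc k < length q" for k
    using backward forward that by (cases "k < m") auto
  ultimately show ?thesis
    using assms(2) m unfolding is_trek_def by auto
qed

lemma ordered_asym:
  fixes E :: "(nat \<times> nat) set"
  assumes "\<forall>(i,j)\<in>E. i < j"
  shows "asym E"
proof (rule asymI)
  fix x y assume "(x, y) \<in> E"
  then have "x < y" using assms by blast
  then show "(y, x) \<notin> E" using assms by fastforce
qed

lemma successively_join_diverging_path:
  assumes "successively (\<lambda>x y. (x,y) \<in> E) (c # R)" "successively (\<lambda>x y. (x,y) \<in> E) (c # R')"
  shows "diverging_path E (length R) (rev R @ c # R')"
  using assms unfolding diverging_path_def
  by (auto simp: successively_append_iff successively_Cons last_rev)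

lemma ordered_max_common_ancestor:
  fixes E :: "(nat \<times> nat) set"
  assumes ord: "\<forall>(i,j)\<in>E. i < j" and "(c,v) \<in> E\<^sup>*" "(c,w) \<in> E\<^sup>*"
  obtains t where "(t,v) \<in> E\<^sup>*" "(t,w) \<in> E\<^sup>*"
    "\<And>d. (d,v) \<in> E\<^sup>* \<Longrightarrow> (d,w) \<in> E\<^sup>* \<Longrightarrow> d \<le> t"
proof -
  define S where "S = {c. (c,v) \<in> E\<^sup>* \<and> (c,w) \<in> E\<^sup>*}"
  have "finite S"
    by (rule finite_subset[of _ "{..v}"]) (auto simp: S_def dest: ordered_rtrancl_le[OF ord])
  moreover have "c \<in> S" using assms(2,3) by (simp add: S_def)
  ultimately show thesis
    using Max_in[of S] Max_ge[of S] by (intro that[of "Max S"]) (auto simp: S_def)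
qed

lemma common_ancestor_imp_trek_between:
  fixes E :: "(nat \<times> nat) set"
  assumes ord: "\<forall>(i,j)\<in>E. i < j" and "(c,v) \<in> E\<^sup>*" "(c,w) \<in> E\<^sup>*"
  shows "trek_between E v w"
proof -
  obtain t where "(t,v) \<in> E\<^sup>*" "(t,w) \<in> E\<^sup>*"
    and t_max: "\<And>d. (d,v) \<in> E\<^sup>* \<Longrightarrow> (d,w) \<in> E\<^sup>* \<Longrightarrow> d \<le> t"
    using ordered_max_common_ancestor[OF assms] by blast
  obtain Rv where v: "last (t # Rv) = v" and path_v: "successively (\<lambda>x y. (x,y) \<in> E) (t # Rv)"
    using rtrancl_imp_successively[OF \<open>(t,v) \<in> E\<^sup>*\<close>] by blast
  obtain Rw where w: "last (t # Rw) = w" and path_w: "successively (\<lambda>x y. (x,y) \<in> E) (t # Rw)"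
    using rtrancl_imp_successively[OF \<open>(t,w) \<in> E\<^sup>*\<close>] by blast
  let ?q = "rev Rv @ t # Rw"
  have distinct_v: "distinct (t # Rv)" and distinct_w: "distinct (t # Rw)"
    using ordered_successively_distinct[OF ord] path_v path_w by blast+
  \<comment> \<open>Maximality of \<open>t\<close> makes the two directed paths meet only at \<open>t\<close>.\<close>
  have "d \<notin> set (t # Rw)" if "d \<in> set Rv" for d
  proof
    assume "d \<in> set (t # Rw)"
    then have "(d, w) \<in> E\<^sup>*"
      using successively_imp_rtrancl[OF path_w] w by blast
    moreover have "(t, d) \<in> E\<^sup>*" "(d, v) \<in> E\<^sup>*"
      using successively_imp_rtrancl[OF path_v, of d] that v by auto
    ultimately have "d \<le> t" "t \<le> d"
      using t_max ordered_rtrancl_le[OF ord] by auto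
    moreover have "t \<noteq> d"
      using distinct_v that by auto
    ultimately show False by simp
  qed
  then have "distinct ?q"
    using distinct_v distinct_w by (simp only: distinct_append distinct_rev set_rev) auto
  then have "is_trek E ?q"
    by (rule diverging_path_is_trek[OF ordered_asym[OF ord] _
          successively_join_diverging_path[OF path_v path_w]])
  moreover have "hd ?q = v"
    using v by (cases Rv rule: rev_cases) simp_all
  moreover have "last ?q = w"
    using w by simp
  ultimately show ?thesis
    unfolding trek_between_def by blast
qed

lemma trek_between_iff_common_ancestor:
  fixes E :: "(nat \<times> nat) set"
  assumes "\<forall>(i,j)\<in>E. i < j"
  shows "trek_between E v w \<longleftrightarrow> (\<exists>c. (c,v) \<in> E\<^sup>* \<and> (c,w) \<in> E\<^sup>*)"
proof
  assume "trek_between E v w"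
  then obtain p where "is_trek E p" "hd p = v" "last p = w"
    by (auto simp: trek_between_def)
  then show "\<exists>c. (c,v) \<in> E\<^sup>* \<and> (c,w) \<in> E\<^sup>*"
    by (metis trek_imp_diverging_path diverging_path_common_ancestor)
qed (use assms common_ancestor_imp_trek_between in blast)

theorem lemma2p4:
  fixes n :: nat and AA YY :: "int mat set"
  defines "AA \<equiv> {adj_mat n E | E. ordered_dag_on n E}"
  defines "YY \<equiv> U_mat n ` AA"
  shows "bij_betw (U_mat n) AA YY \<and>
         (\<forall>E. ordered_dag_on n E \<longrightarrow>
              supp_adj (U_mat n (adj_mat n E)) = uncond_dep_adj n E)"
proof (intro conjI allI impI)
  have "inj_on (U_mat n) AA"
    unfolding AA_def by (rule inj_onI) (auto dest: U_mat_adj_inj)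
  then show "bij_betw (U_mat n) AA YY"
    unfolding YY_def by (rule inj_on_imp_bij_betw)
next
  fix E assume E: "ordered_dag_on n E"
  show "supp_adj (U_mat n (adj_mat n E)) = uncond_dep_adj n E"
  proof (rule eq_matI)
    fix i j assume "i < dim_row (uncond_dep_adj n E)" "j < dim_col (uncond_dep_adj n E)"
    then have ij: "i < n" "j < n"
      by (simp_all add: uncond_dep_adj_def)
    show "supp_adj (U_mat n (adj_mat n E)) $$ (i,j) = uncond_dep_adj n E $$ (i,j)"
      using U_mat_adj_neq_0_iff[OF E ij] ij
        trek_between_iff_common_ancestor[OF ordered_dag_on_less[OF E]]
      by (simp add: supp_adj_def uncond_dep_adj_def U_mat_def)
  qed (simp_all add: supp_adj_def uncond_dep_adj_def U_mat_def)
qed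

end
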